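(* Let $\mathbf A$ be an $L\times K$ binary matrix with full row rank, and consider any computing scheme that computes $\mathbf r=\mathbf s\mathbf A$ over $\mathbb F_2$ using a circuit built from gates of Gate Model I, each failing independently with error probability $\epsilon$, with maximum fan-in $D$. If the scheme achieves block error probability $P_e^{\text{blk}}=\Pr(\hat{\mathbf r}\ne\mathbf r)<p_{\text{tar}}$, then the number of operations per output bit satisfies $$\mathscr N_{\text{per-bit}}\ge\frac{L\log(1/p_{\text{tar}})}{KD\log(D/\epsilon)}=\Omega\!\left(\frac{L\log(1/p_{\text{tar}})}{K\log(1/\epsilon)}\right).$$
   Context: Gate Model I: each gate computes a deterministic Boolean function $g$ of $d_g\le D$ inputs and outputs $g(u_1,\dots,u_{d_g})\oplus z_g$ with $z_g\sim\mathrm{Bernoulli}(\epsilon)$, $\epsilon<1/2$, independently across gates and across uses. A noisy circuit has binary inputs $s_1,\dots,s_L$, such gates, and noiseless registers and wires; gate inputs can be circuit inputs, gate outputs or register outputs. The computation proceeds in a predetermined number of stages; in each stage some gates are activated and some registers updated, and the outputs are finally stored in registers. One operation is one activation of one gate; $\mathscr N_{\text{per-bit}}$ is the total number of operations divided by $K$. $\hat{\mathbf r}$ is the computed output. *)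

theory Defs
  imports "HOL-Probability.Probability"
begin

text \<open>Noisy circuits of Gate Model I, unrolled as a straight-line program of gate
  activations (operations).  Noiseless registers and wires only copy values, so every
  value read by a gate is a circuit input, a constant, or the output of an earlier
  activation.\<close>

datatype src = Inp nat | GOut nat | Cst bool

type_synonym operation = "(bool list \<Rightarrow> bool) \<times> src list"

fun valid_src :: "nat \<Rightarrow> nat \<Rightarrow> src \<Rightarrow> bool" where
  "valid_src L j (Inp i) = (i < L)"
| "valid_src L j (GOut m) = (m < j)"
| "valid_src L j (Cst b) = True"

fun valid_out :: "nat \<Rightarrow> src \<Rightarrow> bool" where
  "valid_out N (Inp i) = False"
| "valid_out N (GOut m) = (m < N)"
| "valid_out N (Cst b) = True"

definition wf_circuit :: "nat \<Rightarrow> nat \<Rightarrow> nat \<Rightarrow> operation list \<Rightarrow> src list \<Rightarrow> bool" where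
  "wf_circuit L K D ops outs \<longleftrightarrow>
     (\<forall>j < length ops. length (snd (ops ! j)) \<le> D \<and>
                        (\<forall>x \<in> set (snd (ops ! j)). valid_src L j x)) \<and>
     length outs = K \<and> (\<forall>x \<in> set outs. valid_out (length ops) x)"

fun eval_src :: "(nat \<Rightarrow> bool) \<Rightarrow> bool list \<Rightarrow> src \<Rightarrow> bool" where
  "eval_src s vals (Inp i) = s i"
| "eval_src s vals (GOut m) = vals ! m"
| "eval_src s vals (Cst b) = b"

definition step :: "(nat \<Rightarrow> bool) \<Rightarrow> (nat \<Rightarrow> bool) \<Rightarrow> bool list \<Rightarrow> operation \<Rightarrow> bool list" where
  "step s z vals op = vals @ [fst op (map (eval_src s vals) (snd op)) \<noteq> z (length vals)]"

definition run_ops :: "(nat \<Rightarrow> bool) \<Rightarrow> (nat \<Rightarrow> bool) \<Rightarrow> operation list \<Rightarrow> bool list" where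
  "run_ops s z ops = foldl (step s z) [] ops"

definition circuit_output ::
  "operation list \<Rightarrow> src list \<Rightarrow> (nat \<Rightarrow> bool) \<Rightarrow> (nat \<Rightarrow> bool) \<Rightarrow> bool list" where
  "circuit_output ops outs s z = map (eval_src s (run_ops s z ops)) outs"

definition noise :: "nat \<Rightarrow> real \<Rightarrow> (nat \<Rightarrow> bool) pmf" where
  "noise N eps = Pi_pmf {..<N} False (\<lambda>_. bernoulli_pmf eps)"

text \<open>r = s A over F_2 (A given by its entries A l k, l < L, k < K).\<close>
definition f2_vecmat :: "nat \<Rightarrow> nat \<Rightarrow> (nat \<Rightarrow> nat \<Rightarrow> bool) \<Rightarrow> (nat \<Rightarrow> bool) \<Rightarrow> bool list" where
  "f2_vecmat L K A s = map (\<lambda>k. odd (card {l. l < L \<and> s l \<and> A l k})) [0..<K]"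

text \<open>Full row rank over F_2: the L rows are linearly independent, i.e. no nontrivial
  F_2-combination (= sum over a nonempty set of rows) vanishes.\<close>
definition f2_full_row_rank :: "nat \<Rightarrow> nat \<Rightarrow> (nat \<Rightarrow> nat \<Rightarrow> bool) \<Rightarrow> bool" where
  "f2_full_row_rank L K A \<longleftrightarrow>
     (\<forall>S \<subseteq> {..<L}. S \<noteq> {} \<longrightarrow> (\<exists>k < K. odd (card {l \<in> S. A l k})))"

definition block_error :: "real \<Rightarrow> nat \<Rightarrow> nat \<Rightarrow> (nat \<Rightarrow> nat \<Rightarrow> bool) \<Rightarrow>
    operation list \<Rightarrow> src list \<Rightarrow> (nat \<Rightarrow> bool) \<Rightarrow> real" where
  "block_error eps L K A ops outs s =
     measure_pmf.prob (noise (length ops) eps)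
       {z. circuit_output ops outs s z \<noteq> f2_vecmat L K A s}"

end

theory Submission
  imports Defs
begin

text \<open>Fix the input \<open>s\<close> and look at the vector \<open>v\<close> of all gate outputs.  Since gates only read
  earlier gates, \<open>v\<close> determines the noise uniquely (\<open>z\<^sub>j = v\<^sub>j \<noteq> g\<^sub>j(v)\<close>), so \<open>Pr\<^sub>s[v]\<close> is a
  product of Bernoulli weights, and the circuit output is a function of \<open>v\<close> alone.  By double
  counting, some input \<open>l\<close> is read by at most \<open>m \<le> N D / L\<close> of the \<open>N\<close> gates.  Flipping \<open>s\<^sub>l\<close>
  changes only the noise bits of these \<open>m\<close> gates, so every \<open>Pr\<^sub>s[v]\<close> shrinks by at most the factor
  \<open>(\<epsilon>/(1-\<epsilon>))\<^sup>m\<close>.  As \<open>A\<close> has full row rank, the flip changes the correct output, whence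
  \<open>(\<epsilon>/(1-\<epsilon>))\<^sup>m (1 - p) < p\<close>, i.e. \<open>p > \<epsilon>\<^sup>m\<close> and \<open>L log(1/p) \<le> N D log(1/\<epsilon>)\<close>.  If \<open>m = 0\<close> one
  uses instead that the \<open>2\<^sup>L\<close> correct outputs must all be reachable from the \<open>2\<^sup>N\<close> gate-value
  vectors, so \<open>N \<ge> L\<close>.\<close>

section \<open>Gate values of a noisy straight-line circuit\<close>

definition wf_ops :: "nat \<Rightarrow> operation list \<Rightarrow> bool" where
  "wf_ops L ops \<longleftrightarrow> (\<forall>j < length ops. \<forall>x \<in> set (snd (ops ! j)). valid_src L j x)"

definition gate_eval :: "operation list \<Rightarrow> (nat \<Rightarrow> bool) \<Rightarrow> bool list \<Rightarrow> nat \<Rightarrow> bool" where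
  "gate_eval ops s v j = fst (ops ! j) (map (eval_src s v) (snd (ops ! j)))"

lemma length_run_ops [simp]: "length (run_ops s z ops) = length ops"
  by (induction ops rule: rev_induct) (auto simp: run_ops_def step_def)

lemma run_ops_snoc:
  "run_ops s z (ops @ [op]) =
     run_ops s z ops @ [fst op (map (eval_src s (run_ops s z ops)) (snd op)) \<noteq> z (length ops)]"
  by (simp add: run_ops_def step_def length_run_ops[unfolded run_ops_def])

lemma nth_run_ops:
  "j < length ops \<Longrightarrow> run_ops s z ops ! j = (gate_eval ops s (take j (run_ops s z ops)) j \<noteq> z j)"
proof (induction ops rule: rev_induct)
  case Nil
  then show ?case by simp
next
  case (snoc op ops)
  then consider "j < length ops" | "j = length ops" by fastforce
  then show ?case
    using snoc by cases (auto simp: run_ops_snoc nth_append gate_eval_def)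
qed

lemma gate_eval_take:
  assumes "wf_ops L ops" and "j < length ops"
  shows "gate_eval ops s (take j v) j = gate_eval ops s v j"
proof -
  have "eval_src s (take j v) x = eval_src s v x" if "x \<in> set (snd (ops ! j))" for x
  proof -
    have "valid_src L j x"
      using assms that unfolding wf_ops_def by blast
    then show ?thesis by (cases x) auto
  qed
  then show ?thesis
    unfolding gate_eval_def by (simp cong: map_cong)
qed

text \<open>Well-formedness makes this system of equations triangular, so the gate values are its
  unique solution.\<close>
lemma run_ops_eq_iff:
  assumes wf: "wf_ops L ops"
  shows "run_ops s z ops = v \<longleftrightarrow>
           length v = length ops \<and> (\<forall>j < length ops. v ! j = (gate_eval ops s v j \<noteq> z j))"
proof
  assume "run_ops s z ops = v"
  then show "length v = length ops \<and> (\<forall>j < length ops. v ! j = (gate_eval ops s v j \<noteq> z j))"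
    using nth_run_ops gate_eval_take[OF wf] by auto
next
  assume v: "length v = length ops \<and> (\<forall>j < length ops. v ! j = (gate_eval ops s v j \<noteq> z j))"
  let ?w = "run_ops s z ops"
  have "?w ! j = v ! j" if "j < length ops" for j
    using that
  proof (induction j rule: less_induct)
    case (less j)
    then have "take j ?w = take j v"
      using v by (intro nth_equalityI) auto
    then show ?case
      using less.prems v nth_run_ops[OF less.prems] gate_eval_take[OF wf less.prems] by metis
  qed
  then show "?w = v"
    using v by (intro nth_equalityI) auto
qed

definition noise_pattern :: "operation list \<Rightarrow> (nat \<Rightarrow> bool) \<Rightarrow> bool list \<Rightarrow> nat \<Rightarrow> bool" where
  "noise_pattern ops s v j \<longleftrightarrow> j < length ops \<and> v ! j \<noteq> gate_eval ops s v j"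

definition gate_values :: "operation list \<Rightarrow> real \<Rightarrow> (nat \<Rightarrow> bool) \<Rightarrow> bool list pmf" where
  "gate_values ops eps s = map_pmf (\<lambda>z. run_ops s z ops) (noise (length ops) eps)"

lemma run_ops_preimage:
  assumes "wf_ops L ops"
  shows "(\<lambda>z. run_ops s z ops) -` {v} \<inter> {z. \<forall>j \<ge> length ops. \<not> z j} =
           (if length v = length ops then {noise_pattern ops s v} else {})"
proof -
  have "run_ops s z ops = v \<longleftrightarrow> length v = length ops \<and> z = noise_pattern ops s v"
    if "\<forall>j \<ge> length ops. \<not> z j" for z
  proof -
    have "(\<forall>j < length ops. v ! j = (gate_eval ops s v j \<noteq> z j)) \<longleftrightarrow> z = noise_pattern ops s v"
      using that unfolding noise_pattern_def fun_eq_iff by (metis not_le)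
    then show ?thesis
      unfolding run_ops_eq_iff[OF assms] by blast
  qed
  moreover have "\<forall>j \<ge> length ops. \<not> noise_pattern ops s v j"
    by (simp add: noise_pattern_def)
  ultimately show ?thesis
    by auto
qed

lemma pmf_gate_values:
  assumes "wf_ops L ops"
  shows "pmf (gate_values ops eps s) v =
           (if length v = length ops
            then \<Prod>j<length ops. pmf (bernoulli_pmf eps) (noise_pattern ops s v j) else 0)"
proof -
  let ?N = "length ops"
  let ?M = "noise ?N eps"
  let ?S = "{z. \<forall>j \<ge> ?N. \<not> z j}"
  let ?X = "(\<lambda>z. run_ops s z ops) -` {v}"
  have "set_pmf ?M \<subseteq> ?S"
    using set_Pi_pmf_subset[of "{..<?N}" False "\<lambda>_. bernoulli_pmf eps"]
    unfolding noise_def by auto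
  then have "?X \<inter> ?S \<inter> set_pmf ?M = ?X \<inter> set_pmf ?M"
    by (simp add: Int_absorb1 inf_assoc)
  then have "measure_pmf.prob ?M ?X = measure_pmf.prob ?M (?X \<inter> ?S)"
    by (simp only: flip: measure_Int_set_pmf[of ?M ?X] measure_Int_set_pmf[of ?M "?X \<inter> ?S"])
  also have "\<dots> = (if length v = ?N then pmf ?M (noise_pattern ops s v) else 0)"
    by (simp add: run_ops_preimage[OF assms] measure_pmf_single)
  also have "pmf ?M (noise_pattern ops s v) =
               (\<Prod>j<?N. pmf (bernoulli_pmf eps) (noise_pattern ops s v j))"
    unfolding noise_def by (rule pmf_Pi') (auto simp: noise_pattern_def)
  finally show ?thesis
    by (simp add: gate_values_def pmf_map)
qed

section \<open>Flipping one input bit\<close>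

lemma bernoulli_pmf_ratio_ge:
  assumes "0 \<le> eps" and "eps \<le> 1/2"
  shows "eps / (1 - eps) * pmf (bernoulli_pmf eps) a \<le> pmf (bernoulli_pmf eps) b"
proof -
  have "pmf (bernoulli_pmf eps) a \<le> 1 - eps"
    using assms by (cases a) auto
  moreover have "0 \<le> eps / (1 - eps)"
    using assms by (intro divide_nonneg_nonneg) auto
  ultimately have "eps / (1 - eps) * pmf (bernoulli_pmf eps) a \<le> eps / (1 - eps) * (1 - eps)"
    by (rule mult_left_mono)
  also have "\<dots> = eps"
    using assms by simp
  also have "\<dots> \<le> pmf (bernoulli_pmf eps) b"
    using assms by (cases b) auto
  finally show ?thesis .
qed

lemma prod_bernoulli_pmf_change:
  assumes "0 \<le> eps" and "eps \<le> 1/2" and "finite I" and "G \<subseteq> I"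
    and "\<And>j. j \<in> I - G \<Longrightarrow> f j = g j"
  shows "(eps / (1 - eps)) ^ card G * (\<Prod>j\<in>I. pmf (bernoulli_pmf eps) (f j))
           \<le> (\<Prod>j\<in>I. pmf (bernoulli_pmf eps) (g j))"
proof -
  let ?c = "eps / (1 - eps)"
  have "?c ^ card G = (\<Prod>j\<in>I. if j \<in> G then ?c else 1)"
    using assms(3,4) by (simp add: prod.If_cases Int_absorb1)
  then have "?c ^ card G * (\<Prod>j\<in>I. pmf (bernoulli_pmf eps) (f j))
               = (\<Prod>j\<in>I. (if j \<in> G then ?c else 1) * pmf (bernoulli_pmf eps) (f j))"
    by (simp add: prod.distrib)
  also have "\<dots> \<le> (\<Prod>j\<in>I. pmf (bernoulli_pmf eps) (g j))"
    using assms bernoulli_pmf_ratio_ge[OF assms(1,2)] by (intro prod_mono) auto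
  finally show ?thesis .
qed

definition readers :: "operation list \<Rightarrow> nat \<Rightarrow> nat set" where
  "readers ops l = {j. j < length ops \<and> Inp l \<in> set (snd (ops ! j))}"

lemma noise_pattern_upd:
  assumes "j \<notin> readers ops l"
  shows "noise_pattern ops (s(l := b)) v j = noise_pattern ops s v j"
proof -
  have "eval_src (s(l := b)) v x = eval_src s v x" if "j < length ops" "x \<in> set (snd (ops ! j))" for x
    using assms that unfolding readers_def by (cases x) auto
  then show ?thesis
    unfolding noise_pattern_def gate_eval_def by (auto cong: map_cong)
qed

lemma pmf_gate_values_upd:
  assumes "wf_ops L ops" and "0 \<le> eps" and "eps \<le> 1/2"
  shows "(eps / (1 - eps)) ^ card (readers ops l) * pmf (gate_values ops eps s) v
           \<le> pmf (gate_values ops eps (s(l := b))) v"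
proof (cases "length v = length ops")
  case True
  have "readers ops l \<subseteq> {..<length ops}"
    by (auto simp: readers_def)
  then show ?thesis
    using True noise_pattern_upd
    by (simp add: pmf_gate_values[OF assms(1)])
       (rule prod_bernoulli_pmf_change[OF assms(2,3)]; simp)
next
  case False
  then show ?thesis
    by (simp add: pmf_gate_values[OF assms(1)])
qed

lemma measure_pmf_ge_if_pmf_ge:
  assumes "\<And>x. c * pmf p x \<le> pmf q x"
  shows "c * measure_pmf.prob p A \<le> measure_pmf.prob q A"
proof -
  have "c * measure_pmf.prob p A = (\<Sum>\<^sub>ax\<in>A. c * pmf p x)"
    by (simp add: measure_pmf_conv_infsetsum infsetsum_cmult_right[OF pmf_abs_summable])
  also have "\<dots> \<le> (\<Sum>\<^sub>ax\<in>A. pmf q x)"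
    using assms by (intro infsetsum_mono abs_summable_on_cmult_right) auto
  finally show ?thesis
    by (simp add: measure_pmf_conv_infsetsum)
qed

definition read_outputs :: "src list \<Rightarrow> bool list \<Rightarrow> bool list" where
  "read_outputs outs v = map (eval_src (\<lambda>_. False) v) outs"

lemma circuit_output_eq_read_outputs:
  assumes "\<forall>x \<in> set outs. valid_out (length ops) x"
  shows "circuit_output ops outs s z = read_outputs outs (run_ops s z ops)"
proof -
  have "eval_src s v x = eval_src (\<lambda>_. False) v x" if "x \<in> set outs" for v x
    using assms that by (cases x) auto
  then show ?thesis
    unfolding circuit_output_def read_outputs_def by simp
qed

lemma prob_circuit_output:
  assumes "\<forall>x \<in> set outs. valid_out (length ops) x"
  shows "measure_pmf.prob (noise (length ops) eps) {z. P (circuit_output ops outs s z)} =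
           measure_pmf.prob (gate_values ops eps s) {v. P (read_outputs outs v)}"
  by (simp add: gate_values_def measure_map_pmf vimage_def
                circuit_output_eq_read_outputs[OF assms])

lemma block_error_upd:
  assumes "wf_circuit L K D ops outs" and "0 \<le> eps" and "eps \<le> 1/2"
    and "f2_vecmat L K A (s(l := b)) \<noteq> f2_vecmat L K A s"
  shows "(eps / (1 - eps)) ^ card (readers ops l) * (1 - block_error eps L K A ops outs s)
           \<le> block_error eps L K A ops outs (s(l := b))"
proof -
  let ?c = "(eps / (1 - eps)) ^ card (readers ops l)"
  let ?M = "noise (length ops) eps"
  let ?r = "f2_vecmat L K A s"
  have wf: "wf_ops L ops" and outs: "\<forall>x \<in> set outs. valid_out (length ops) x"
    using assms(1) by (auto simp: wf_circuit_def wf_ops_def)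
  have "1 - block_error eps L K A ops outs s =
          measure_pmf.prob ?M {z. circuit_output ops outs s z = ?r}"
    using measure_pmf.prob_compl[of "{z. circuit_output ops outs s z \<noteq> ?r}" ?M]
    by (simp add: block_error_def Compl_eq_Diff_UNIV[symmetric] Collect_neg_eq[symmetric])
  then have "?c * (1 - block_error eps L K A ops outs s) =
               ?c * measure_pmf.prob (gate_values ops eps s) {v. read_outputs outs v = ?r}"
    using prob_circuit_output[OF outs, where P = "\<lambda>w. w = ?r"] by simp
  also have "\<dots> \<le> measure_pmf.prob (gate_values ops eps (s(l := b))) {v. read_outputs outs v = ?r}"
    by (intro measure_pmf_ge_if_pmf_ge pmf_gate_values_upd[OF wf assms(2,3)])
  also have "\<dots> = measure_pmf.prob ?M {z. circuit_output ops outs (s(l := b)) z = ?r}"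
    using prob_circuit_output[OF outs, where P = "\<lambda>w. w = ?r"] by simp
  also have "\<dots> \<le> block_error eps L K A ops outs (s(l := b))"
    unfolding block_error_def using assms(4)
    by (intro measure_pmf.finite_measure_mono) auto
  finally show ?thesis .
qed

section \<open>Counting arguments\<close>

lemma odd_card_sym_diff:
  assumes "finite X" and "finite Y"
  shows "odd (card (sym_diff X Y)) \<longleftrightarrow> odd (card X) \<noteq> odd (card Y)"
proof -
  have "X \<union> Y = sym_diff X Y \<union> (X \<inter> Y)"
    by blast
  moreover have "card (sym_diff X Y \<union> (X \<inter> Y)) = card (sym_diff X Y) + card (X \<inter> Y)"
    using assms by (intro card_Un_disjoint) auto
  moreover have "card X + card Y = card (X \<union> Y) + card (X \<inter> Y)"
    using assms by (rule card_Un_Int)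
  ultimately show ?thesis
    by presburger
qed

lemma nth_f2_vecmat: "k < K \<Longrightarrow> f2_vecmat L K A s ! k \<longleftrightarrow> odd (card {l. l < L \<and> s l \<and> A l k})"
  by (simp add: f2_vecmat_def)

lemma inj_on_f2_vecmat:
  assumes "f2_full_row_rank L K A"
  shows "inj_on (\<lambda>T. f2_vecmat L K A (\<lambda>l. l \<in> T)) (Pow {..<L})"
proof (rule inj_onI, rule ccontr)
  fix T T' assume T: "T \<in> Pow {..<L}" and T': "T' \<in> Pow {..<L}" and "T \<noteq> T'"
    and eq: "f2_vecmat L K A (\<lambda>l. l \<in> T) = f2_vecmat L K A (\<lambda>l. l \<in> T')"
  then have "sym_diff T T' \<noteq> {}" and "sym_diff T T' \<subseteq> {..<L}"
    by auto
  then obtain k where "k < K" and odd: "odd (card {l \<in> sym_diff T T'. A l k})"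
    using assms unfolding f2_full_row_rank_def by blast
  define X where "X = {l \<in> T. A l k}"
  define Y where "Y = {l \<in> T'. A l k}"
  have "{l. l < L \<and> l \<in> T \<and> A l k} = X" and "{l. l < L \<and> l \<in> T' \<and> A l k} = Y"
    using T T' by (auto simp: X_def Y_def)
  then have "odd (card X) = odd (card Y)"
    using arg_cong[OF eq, of "\<lambda>r. r ! k"] by (simp add: nth_f2_vecmat[OF \<open>k < K\<close>])
  moreover have "{l \<in> sym_diff T T'. A l k} = sym_diff X Y"
    by (auto simp: X_def Y_def)
  moreover have "finite X" "finite Y"
    using T T' by (auto simp: X_def Y_def intro: finite_subset)
  ultimately show False
    using odd odd_card_sym_diff[of X Y] by simp
qed

lemma block_error_lt_1_imp_reachable:
  assumes "\<forall>x \<in> set outs. valid_out (length ops) x"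
    and "block_error eps L K A ops outs s < 1"
  shows "f2_vecmat L K A s \<in> read_outputs outs ` {v. length v = length ops}"
proof (rule ccontr)
  assume unreachable: "f2_vecmat L K A s \<notin> read_outputs outs ` {v. length v = length ops}"
  have "read_outputs outs (run_ops s z ops) \<in> read_outputs outs ` {v. length v = length ops}" for z
    by (intro imageI) simp
  then have "circuit_output ops outs s z \<noteq> f2_vecmat L K A s" for z
    using unreachable unfolding circuit_output_eq_read_outputs[OF assms(1)] by metis
  then have "block_error eps L K A ops outs s = 1"
    by (simp add: block_error_def)
  then show False
    using assms(2) by simp
qed

lemma inputs_le_length_ops:
  assumes "f2_full_row_rank L K A" and "wf_circuit L K D ops outs"
    and "\<forall>s. block_error eps L K A ops outs s < 1"
  shows "L \<le> length ops"
proof -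
  let ?f = "\<lambda>T. f2_vecmat L K A (\<lambda>l. l \<in> T)"
  let ?V = "{v :: bool list. length v = length ops}"
  have outs: "\<forall>x \<in> set outs. valid_out (length ops) x"
    using assms(2) by (simp add: wf_circuit_def)
  have finite_V: "finite ?V"
    using finite_lists_length_eq[of "UNIV :: bool set" "length ops"] by simp
  have "(2::nat) ^ L = card (?f ` Pow {..<L})"
    using card_image[OF inj_on_f2_vecmat[OF assms(1)]] by (simp add: card_Pow)
  also have "\<dots> \<le> card (read_outputs outs ` ?V)"
    using block_error_lt_1_imp_reachable[OF outs assms(3)[rule_format]] finite_V
    by (intro card_mono) auto
  also have "\<dots> \<le> card ?V"
    using finite_V by (rule card_image_le)
  also have "\<dots> = 2 ^ length ops"
    using card_lists_length_eq[of "UNIV :: bool set" "length ops"] by simp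
  finally show ?thesis
    by simp
qed

lemma card_inputs_read_le: "card {l. l < L \<and> Inp l \<in> set xs} \<le> length xs"
proof -
  have "card {l. l < L \<and> Inp l \<in> set xs} \<le> card (set xs)"
    by (rule card_inj_on_le[where f = Inp]) (auto simp: inj_on_def)
  also have "\<dots> \<le> length xs"
    by (rule card_length)
  finally show ?thesis .
qed

lemma sum_card_readers_le:
  assumes "\<forall>j < length ops. length (snd (ops ! j)) \<le> D"
  shows "(\<Sum>l<L. card (readers ops l)) \<le> length ops * D"
proof -
  let ?R = "\<lambda>l j. Inp l \<in> set (snd (ops ! j))"
  have "(\<Sum>l<L. card (readers ops l)) = (\<Sum>l<L. \<Sum>j\<in>{j \<in> {..<length ops}. ?R l j}. 1)"
    by (simp add: readers_def conj_commute)
  also have "\<dots> = (\<Sum>j<length ops. \<Sum>l | l \<in> {..<L} \<and> ?R l j. 1)"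
    by (rule sum.swap_restrict) auto
  also have "\<dots> = (\<Sum>j<length ops. card {l. l < L \<and> ?R l j})"
    by simp
  also have "\<dots> \<le> (\<Sum>j<length ops. D)"
    using assms card_inputs_read_le order_trans by (intro sum_mono) blast
  finally show ?thesis
    by simp
qed

lemma exists_lightly_read_input:
  assumes "\<forall>j < length ops. length (snd (ops ! j)) \<le> D" and "0 < L"
  shows "\<exists>l < L. L * card (readers ops l) \<le> length ops * D"
proof -
  let ?f = "\<lambda>l. card (readers ops l)"
  have "Min (?f ` {..<L}) \<in> ?f ` {..<L}"
    using assms(2) by (intro Min_in) auto
  then obtain l where "l < L" and "?f l = Min (?f ` {..<L})"
    by auto
  moreover have "card {..<L} * Min (?f ` {..<L}) \<le> (\<Sum>l<L. ?f l)"
    by (rule card_Min_le_sum) simp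
  ultimately show ?thesis
    using sum_card_readers_le[OF assms(1), of L] by auto
qed

lemma eps_power_lt_of_flip:
  fixes eps p :: real
  assumes "0 < eps" and "eps \<le> 1/2" and flip: "(eps / (1 - eps)) ^ m * (1 - p) < p"
  shows "eps ^ max m 1 < p"
proof (cases "m = 0")
  case True
  then show ?thesis
    using assms by simp
next
  case False
  have "0 < p"
  proof (rule ccontr)
    assume "\<not> 0 < p"
    then have "0 \<le> (eps / (1 - eps)) ^ m * (1 - p)"
      using assms by (intro mult_nonneg_nonneg) auto
    then show False
      using flip \<open>\<not> 0 < p\<close> by linarith
  qed
  have "eps ^ m * (1 - p) < p * (1 - eps) ^ m"
    using flip assms by (simp add: power_divide field_simps)
  then have "eps ^ m < p * (eps ^ m + (1 - eps) ^ m)"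
    by (simp add: algebra_simps)
  also have "\<dots> \<le> p * (eps + (1 - eps))"
    using False assms \<open>0 < p\<close> power_decreasing[of 1 m eps] power_decreasing[of 1 m "1 - eps"]
    by (intro mult_left_mono add_mono) auto
  finally show ?thesis
    using False by simp
qed

lemma block_error_floor:
  assumes rank: "f2_full_row_rank L K A"
    and eps: "0 < eps" "eps \<le> 1/2" and "0 < D" and "0 < L"
    and wf: "wf_circuit L K D ops outs"
    and err: "\<forall>s. block_error eps L K A ops outs s < p_tar" and "p_tar \<le> 1"
  shows "\<exists>k. L * k \<le> length ops * D \<and> eps ^ k < p_tar"
proof -
  have fan_in: "\<forall>j < length ops. length (snd (ops ! j)) \<le> D"
    using wf by (simp add: wf_circuit_def)
  obtain l where "l < L" and light: "L * card (readers ops l) \<le> length ops * D"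
    using exists_lightly_read_input[OF fan_in \<open>0 < L\<close>] by blast
  define m where "m = card (readers ops l)"
  define s0 :: "nat \<Rightarrow> bool" where "s0 = (\<lambda>_. False)"
  have "s0 = (\<lambda>x. x \<in> {})" and "s0(l := True) = (\<lambda>x. x \<in> {l})"
    by (auto simp: s0_def fun_eq_iff)
  then have "f2_vecmat L K A (s0(l := True)) \<noteq> f2_vecmat L K A s0"
    using inj_onD[OF inj_on_f2_vecmat[OF rank], of "{l}" "{}"] \<open>l < L\<close> by auto
  then have flip: "(eps / (1 - eps)) ^ m * (1 - block_error eps L K A ops outs s0)
                     \<le> block_error eps L K A ops outs (s0(l := True))"
    unfolding m_def using eps by (intro block_error_upd[OF wf]) auto
  have "(eps / (1 - eps)) ^ m * (1 - p_tar)
          \<le> (eps / (1 - eps)) ^ m * (1 - block_error eps L K A ops outs s0)"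
    using err eps by (intro mult_left_mono) (auto simp: less_imp_le)
  also have "\<dots> < p_tar"
    using flip err by (meson order_le_less_trans)
  finally have "eps ^ max m 1 < p_tar"
    using eps by (intro eps_power_lt_of_flip) auto
  moreover have "L * max m 1 \<le> length ops * D"
  proof (cases "m = 0")
    case True
    \<comment> \<open>Input \<open>l\<close> is read by no gate; the bound then rests on counting reachable outputs.\<close>
    have "L \<le> length ops"
      using err \<open>p_tar \<le> 1\<close> by (intro inputs_le_length_ops[OF rank wf]) (auto intro: less_le_trans)
    moreover have "length ops \<le> length ops * D"
      using \<open>0 < D\<close> by simp
    ultimately show ?thesis
      using True by (simp add: le_trans)
  next
    case False
    then have "max m 1 = m"
      by simp
    then show ?thesis
      using light by (simp add: m_def)
  qed
  ultimately show ?thesis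
    by blast
qed

lemma length_ops_lower_bound:
  assumes rank: "f2_full_row_rank L K A"
    and eps: "0 < eps" "eps < 1/2" and "0 < D"
    and wf: "wf_circuit L K D ops outs"
    and err: "\<forall>s. block_error eps L K A ops outs s < p_tar"
  shows "real L * ln (1 / p_tar) \<le> real (length ops) * real D * ln (real D / eps)"
proof -
  let ?N = "length ops"
  have ln_eps: "0 < ln (1 / eps)" "ln (1 / eps) \<le> ln (real D / eps)"
    using eps \<open>0 < D\<close> by (auto simp: divide_right_mono)
  have "0 \<le> block_error eps L K A ops outs (\<lambda>_. False)"
    by (simp add: block_error_def)
  then have "0 < p_tar"
    using err by (meson le_less_trans)
  consider "1 \<le> p_tar \<or> L = 0" | "p_tar \<le> 1" and "0 < L"
    by linarith
  then show ?thesis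
  proof cases
    case 1
    then have "real L * ln (1 / p_tar) \<le> 0"
      using \<open>0 < p_tar\<close> by (auto simp: mult_nonneg_nonpos)
    also have "0 \<le> real ?N * real D * ln (real D / eps)"
      using ln_eps by simp
    finally show ?thesis .
  next
    case 2
    then obtain k where k: "L * k \<le> ?N * D" and "eps ^ k < p_tar"
      using block_error_floor[OF rank eps(1) _ \<open>0 < D\<close> _ wf err] eps(2) by auto
    then have "ln (eps ^ k) < ln p_tar"
      using eps \<open>0 < p_tar\<close> by (subst ln_less_cancel_iff) auto
    then have "ln (1 / p_tar) \<le> real k * ln (1 / eps)"
      using eps \<open>0 < p_tar\<close> by (simp add: ln_div ln_realpow)
    then have "real L * ln (1 / p_tar) \<le> real L * (real k * ln (1 / eps))"
      by (rule mult_left_mono) simp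
    also have "\<dots> = real (L * k) * ln (1 / eps)"
      by simp
    also have "\<dots> \<le> real (?N * D) * ln (1 / eps)"
      using of_nat_le_iff[THEN iffD2, OF k] ln_eps by (intro mult_right_mono) auto
    also have "\<dots> \<le> real ?N * real D * ln (real D / eps)"
      using ln_eps by (simp add: mult_left_mono)
    finally show ?thesis .
  qed
qed

theorem theorem4:
  fixes L K D :: nat and A :: "nat \<Rightarrow> nat \<Rightarrow> bool"
    and eps p_tar :: real and ops :: "operation list" and outs :: "src list"
  assumes "f2_full_row_rank L K A"
    and "0 \<le> eps" and "eps < 1/2"
    and "wf_circuit L K D ops outs"
    and "\<forall>s. block_error eps L K A ops outs s < p_tar"
  shows "real (length ops) / real K \<ge>
           real L * ln (1 / p_tar) / (real K * real D * ln (real D / eps))"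
proof (cases "eps = 0 \<or> D = 0 \<or> K = 0")
  case True
  \<comment> \<open>Then the right-hand side is \<open>0\<close>, by \<open>x / 0 = 0\<close> and \<open>ln 0 = 0\<close>.\<close>
  then show ?thesis
    by auto
next
  case False
  then have "0 < eps" and "0 < D" and "0 < K"
    using assms(2) by auto
  have "0 < ln (real D / eps)"
    using \<open>0 < eps\<close> \<open>0 < D\<close> assms(3) by (simp add: field_simps)
  have "real L * ln (1 / p_tar) \<le> real (length ops) * real D * ln (real D / eps)"
    using length_ops_lower_bound[OF assms(1) \<open>0 < eps\<close> assms(3) \<open>0 < D\<close> assms(4,5)] .
  then have "real L * ln (1 / p_tar) / (real K * real D * ln (real D / eps))
               \<le> real (length ops) * real D * ln (real D / eps) / (real K * real D * ln (real D / eps))"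
    using \<open>0 < K\<close> \<open>0 < D\<close> \<open>0 < ln (real D / eps)\<close> by (intro divide_right_mono) auto
  also have "\<dots> = real (length ops) / real K"
    using \<open>0 < D\<close> \<open>0 < ln (real D / eps)\<close> by simp
  finally show ?thesis .
qed

end
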